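(* If $w\ne w'$, with $w,w'\in(0,1)$, the measures $\mu_w$ and $\mu_{w'}$ on $X$ are mutually singular.
   Context: Let $\{X_n\}_{n\ge0}$ be the sequence of metric graphs where $X_0$ is a single edge identified with $[0,1]$, and $X_{n+1}$ is obtained from $X_n$ by subdividing each edge of $X_n$ into four equal parts and replacing it by a rescaled copy of the diamond graph. This diamond graph consists of six edges of equal length: edge 1 (initial segment), then two parallel paths of two edges each, namely edges 2,3 (upper path) and edges 4,5 (lower path), then edge 6 (final segment). Each edge of $X_n$ has length $4^{-n}$; collapsing the diamond to a segment gives $1$-Lipschitz maps $\pi_{n+1,n}:X_{n+1}\to X_n$, which compose to maps $\pi_{n,k}:X_n\to X_k$ with $\pi_{k,m}\circ\pi_{n,k}=\pi_{n,m}$. With $X_n$ given the length distance, $X$ is the Gromov–Hausdorff limit of $\{X_n\}$, with $1$-Lipschitz maps $\pi_{\infty,n}:X\to X_n$ satisfying $\pi_{n,k}\circ\pi_{\infty,n}=\pi_{\infty,k}$. For $w\in(0,1)$, $\mu_w$ is the unique probability measure on $X$ such that: (R1) for each $n\ge0$, the pushforward of $\mu_w$ under $\pi_{\infty,n}$ is a probability measure $\mu_{w,n}$ on $X_n$; (R2) $\mu_{w,n}$ is a multiple of arclength on each edge of $X_n$, and $\mu_{w,0}$ is Lebesgue measure on $[0,1]$; (R3) for each edge $e_n$ of $X_n$, letting $e_{n+1,i}$ ($i=1,\dots,6$, labelled as in the diamond graph) be the edges of $X_{n+1}$ whose union is $\pi_{n+1,n}^{-1}(e_n)$, one has $\mu_{w,n+1}$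 restricted to $e_{n+1,i}$ equal to $\mu_{w,n}(e_n)\,\mathcal{H}^1$ restricted to $e_{n+1,i}$ for $i=1,6$, to $w\,\mu_{w,n}(e_n)\,\mathcal{H}^1$ restricted to $e_{n+1,i}$ for $i=2,3$, and to $(1-w)\,\mu_{w,n}(e_n)\,\mathcal{H}^1$ restricted to $e_{n+1,i}$ for $i=4,5$, where $\mathcal{H}^1$ is $1$-dimensional Hausdorff measure. *)

theory Defs
  imports "HOL-Probability.Probability"
begin

text \<open>
Concrete model of the diamond fractal X (inverse limit of the metric graphs X_n).
A point of X is a pair (s, b): s in [0,1] is its image under the collapse map
onto X_0 = [0,1], and b k records, for the level-(k+1) diamond containing the point,
whether the point lies on the upper path (True) or the lower path (False).  The bit
b k is only meaningful if the point lies strictly inside the parallel part of its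
level-(k+1) diamond; otherwise it is normalised to False.
\<close>

text \<open>Local coordinate (in [0,1]) of position s inside its level-k edge.\<close>
fun loc :: "real \<Rightarrow> nat \<Rightarrow> real" where
  "loc s 0 = s"
| "loc s (Suc k) = 4 * loc s k - of_int \<lfloor>4 * loc s k\<rfloor>"

definition mid :: "real \<Rightarrow> bool" where
  "mid x \<longleftrightarrow> 1/4 < x \<and> x < 3/4"

definition diamond_X :: "(real \<times> (nat \<Rightarrow> bool)) set" where
  "diamond_X = {(s, b). 0 \<le> s \<and> s \<le> 1 \<and> (\<forall>k. b k \<longrightarrow> mid (loc s k))}"

text \<open>Edges of the diamond graph are labelled 0..5 (paper: 1..6).
 Edge 0 = initial segment, 1,2 = upper path, 3,4 = lower path, 5 = final segment.
 quarter i = which quarter of the parent edge the sub-edge i projects onto.\<close>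
definition quarter :: "nat \<Rightarrow> real" where
  "quarter i = (if i = 0 then 0 else if i = 1 \<or> i = 3 then 1
                else if i = 2 \<or> i = 4 then 2 else 3)"

definition upper :: "nat \<Rightarrow> bool" where
  "upper i \<longleftrightarrow> i = 1 \<or> i = 2"

text \<open>Edges of X_n are words of length n over {0..5}; the k-th letter is the choice of
 sub-edge made when passing from X_k to X_(k+1).\<close>
definition edge_word :: "nat \<Rightarrow> nat list \<Rightarrow> bool" where
  "edge_word n e \<longleftrightarrow> length e = n \<and> set e \<subseteq> {..<6}"

definition edge_start :: "nat list \<Rightarrow> real" where
  "edge_start e = (\<Sum>k<length e. quarter (e ! k) / 4 ^ (Suc k))"

text \<open>The set of points x of X such that pi_(infinity,n)(x) lies on the edge e of X_n
 with (normalised to [0,1]) arclength parameter in B.\<close>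
definition edge_cyl :: "nat \<Rightarrow> nat list \<Rightarrow> real set \<Rightarrow> (real \<times> (nat \<Rightarrow> bool)) set" where
  "edge_cyl n e B = {(s, b) \<in> diamond_X.
      (let t = 4 ^ n * (s - edge_start e) in 0 \<le> t \<and> t \<le> 1 \<and> t \<in> B) \<and>
      (\<forall>k<n. mid (loc s k) \<longrightarrow> (b k \<longleftrightarrow> upper (e ! k)))}"

definition diamond_space :: "(real \<times> (nat \<Rightarrow> bool)) measure" where
  "diamond_space = sigma diamond_X
     {edge_cyl n e B | n e B. edge_word n e \<and> B \<in> sets borel}"

definition wfac :: "real \<Rightarrow> nat \<Rightarrow> real" where
  "wfac w i = (if i = 1 \<or> i = 2 then w else if i = 3 \<or> i = 4 then 1 - w else 1)"

definition edge_density :: "real \<Rightarrow> nat list \<Rightarrow> real" where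
  "edge_density w e = (\<Prod>k<length e. wfac w (e ! k))"

text \<open>mu satisfies (R1)-(R3) for parameter w: mu is a probability measure on X whose
 pushforward to X_n is, on each edge e of X_n, edge_density w e times H^1
 (the edge e has length 4^-n).\<close>
definition is_mu :: "real \<Rightarrow> (real \<times> (nat \<Rightarrow> bool)) measure \<Rightarrow> bool" where
  "is_mu w \<mu> \<longleftrightarrow> prob_space \<mu> \<and> sets \<mu> = sets diamond_space \<and>
     (\<forall>n e B. edge_word n e \<and> B \<in> sets borel \<longrightarrow>
        measure \<mu> (edge_cyl n e B)
          = edge_density w e / 4 ^ n * measure lborel (B \<inter> {0..1}))"

definition mutually_singular :: "'a measure \<Rightarrow> 'a measure \<Rightarrow> bool" where
  "mutually_singular M N \<longleftrightarrow>
     (\<exists>A \<in> sets M. A \<in> sets N \<and> emeasure M A = 0 \<and> emeasure N (space N - A) = 0)"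

end

theory Submission
  imports Defs
begin

text \<open>
Let \<open>x \<in> X\<close> and let \<open>e\<^sub>n(x)\<close> be the edge of \<open>X\<^sub>n\<close> containing the projection of \<open>x\<close>, a word of
length \<open>n\<close> over the six edges of the diamond.  Under \<open>\<mu>\<^sub>w\<close> the letters of \<open>e\<^sub>n(x)\<close> are independent
with law \<open>(1/4, w/4, w/4, (1-w)/4, (1-w)/4, 1/4)\<close>, so the number of letters on upper paths
has mean \<open>n w/2\<close> and variance \<open>n (w/2)(1 - w/2)\<close>.  By Chebyshev, the frequency of upper
letters deviates from \<open>w/2\<close> by more than \<open>\<epsilon>\<close> with probability \<open>O(1/n)\<close>, which is summable
along \<open>n = m\<^sup>2\<close>; by Borel--Cantelli this frequency converges to \<open>w/2\<close> along that
subsequence \<open>\<mu>\<^sub>w\<close>-almost surely.  Distinct \<open>w\<close> thus give disjoint sets of full measure.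
\<close>

definition words :: "nat \<Rightarrow> nat list set" where
  "words n = {e. edge_word n e}"

lemma finite_words: "finite (words n)"
proof -
  have "words n = {xs. set xs \<subseteq> {..<6} \<and> length xs = n}"
    by (auto simp: words_def edge_word_def)
  then show ?thesis
    using finite_lists_length_eq[of "{..<6::nat}" n] by simp
qed

lemma words_0: "words 0 = {[]}"
  by (auto simp: words_def edge_word_def)

lemma sum_words_Suc:
  "(\<Sum>e\<in>words (Suc n). f e) = (\<Sum>i<6. \<Sum>e\<in>words n. f (i # e))"
proof -
  have "words (Suc n) = (\<lambda>(i, e). i # e) ` ({..<6} \<times> words n)"
    by (auto simp: words_def edge_word_def length_Suc_conv image_iff)
  moreover have "inj_on (\<lambda>(i, e). i # e) ({..<6::nat} \<times> words n)"
    by (auto simp: inj_on_def)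
  ultimately show ?thesis
    by (simp add: sum.reindex sum.cartesian_product prod.case_distrib)
qed

lemma sum_prod_list_words:
  fixes p :: "nat \<Rightarrow> 'a::comm_semiring_1"
  shows "(\<Sum>e\<in>words n. prod_list (map p e)) = (\<Sum>i<6. p i) ^ n"
proof (induction n)
  case 0
  then show ?case by (simp add: words_0)
next
  case (Suc n)
  then show ?case
    by (simp add: sum_words_Suc sum_distrib_left[symmetric] sum_distrib_right[symmetric])
qed

lemma variance_sum_list_words:
  fixes p u :: "nat \<Rightarrow> real"
  defines "q \<equiv> \<Sum>i<6. p i * u i"
  assumes total: "(\<Sum>i<6. p i) = 1"
  shows "(\<Sum>e\<in>words n. prod_list (map p e) * (sum_list (map u e) - n * q)\<^sup>2)
           = n * (\<Sum>i<6. p i * (u i - q)\<^sup>2)"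
proof (induction n)
  case 0
  then show ?case by (simp add: words_0)
next
  case (Suc n)
  let ?P = "\<lambda>e. prod_list (map p e)" and ?D = "\<lambda>e. sum_list (map u e) - n * q"
  have mass: "(\<Sum>e\<in>words n. ?P e) = 1"
    using sum_prod_list_words[of p n] total by simp
  \<comment> \<open>The cross term vanishes because the centred letter statistic has mean zero.\<close>
  have centred: "(\<Sum>i<6. 2 * (p i * (u i - q))) = 0"
    using total
    by (simp add: q_def right_diff_distrib sum_subtractf sum_distrib_left[symmetric]
        sum_distrib_right[symmetric])
  have "(\<Sum>e\<in>words (Suc n). ?P e * (sum_list (map u e) - Suc n * q)\<^sup>2)
      = (\<Sum>i<6. \<Sum>e\<in>words n. p i * (u i - q)\<^sup>2 * ?P e + 2 * (p i * (u i - q)) * (?P e * ?D e)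
                               + p i * (?P e * (?D e)\<^sup>2))"
    unfolding sum_words_Suc
    by (intro sum.cong refl) (simp add: power2_eq_square algebra_simps)
  also have "\<dots> = (\<Sum>i<6. p i * (u i - q)\<^sup>2) * (\<Sum>e\<in>words n. ?P e)
      + (\<Sum>i<6. 2 * (p i * (u i - q))) * (\<Sum>e\<in>words n. ?P e * ?D e)
      + (\<Sum>i<6. p i) * (\<Sum>e\<in>words n. ?P e * (?D e)\<^sup>2)"
    by (simp only: sum.distrib sum_product)
  also have "\<dots> = Suc n * (\<Sum>i<6. p i * (u i - q)\<^sup>2)"
    unfolding mass centred total Suc.IH by (simp add: algebra_simps)
  finally show ?case .
qed

lemma chebyshev_finite_sum:
  fixes P X :: "'a \<Rightarrow> real"
  assumes "finite E" "\<And>e. e \<in> E \<Longrightarrow> 0 \<le> P e" "0 < t"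
  shows "(\<Sum>e\<in>{e\<in>E. t < \<bar>X e\<bar>}. P e) \<le> (\<Sum>e\<in>E. P e * (X e)\<^sup>2) / t\<^sup>2"
proof -
  have "(\<Sum>e\<in>{e\<in>E. t < \<bar>X e\<bar>}. P e) \<le> (\<Sum>e\<in>{e\<in>E. t < \<bar>X e\<bar>}. P e * (X e)\<^sup>2 / t\<^sup>2)"
  proof (rule sum_mono)
    fix e assume e: "e \<in> {e\<in>E. t < \<bar>X e\<bar>}"
    then have "\<bar>t\<bar> \<le> \<bar>X e\<bar>"
      using assms(3) by simp
    then have "t\<^sup>2 \<le> (X e)\<^sup>2"
      by (simp only: abs_le_square_iff)
    then show "P e \<le> P e * (X e)\<^sup>2 / t\<^sup>2"
      using e assms(2,3) by (simp add: le_divide_eq mult_left_mono)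
  qed
  also have "\<dots> \<le> (\<Sum>e\<in>E. P e * (X e)\<^sup>2 / t\<^sup>2)"
    using assms by (intro sum_mono2) auto
  finally show ?thesis
    by (simp add: sum_divide_distrib)
qed

text \<open>\<open>rescaled_pos s e k\<close> is the position of \<open>s\<close> relative to the level-\<open>k\<close> ancestor of the
  edge \<open>e\<close>, rescaled so that this ancestor becomes \<open>[0,1]\<close>.\<close>

definition rescaled_pos :: "real \<Rightarrow> nat list \<Rightarrow> nat \<Rightarrow> real" where
  "rescaled_pos s e k = 4 ^ k * (s - edge_start (take k e))"

lemma quarter_cases: "quarter i \<in> {0, 1, 2, 3}"
  by (simp add: quarter_def)

lemma edge_start_take_Suc:
  assumes "k < length e"
  shows "edge_start (take (Suc k) e) = edge_start (take k e) + quarter (e ! k) / 4 ^ Suc k"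
proof -
  have len: "length (take (Suc k) e) = Suc k" "length (take k e) = k"
    using assms by auto
  have "edge_start (take (Suc k) e) = (\<Sum>j<Suc k. quarter (take (Suc k) e ! j) / 4 ^ Suc j)"
    unfolding edge_start_def len ..
  also have "\<dots> = (\<Sum>j<k. quarter (take k e ! j) / 4 ^ Suc j) + quarter (e ! k) / 4 ^ Suc k"
    by (simp add: nth_take)
  also have "(\<Sum>j<k. quarter (take k e ! j) / 4 ^ Suc j) = edge_start (take k e)"
    unfolding edge_start_def len ..
  finally show ?thesis .
qed

lemma rescaled_pos_Suc:
  "k < length e \<Longrightarrow> rescaled_pos s e (Suc k) = 4 * rescaled_pos s e k - quarter (e ! k)"
  unfolding rescaled_pos_def by (simp add: edge_start_take_Suc algebra_simps)

lemma rescaled_pos_interior: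
  assumes "length e = n" "0 < rescaled_pos s e n" "rescaled_pos s e n < 1" "k \<le> n"
  shows "0 < rescaled_pos s e k \<and> rescaled_pos s e k < 1"
  using assms(4)
proof (induction rule: inc_induct)
  case base
  then show ?case using assms(2,3) by simp
next
  case (step k)
  then have "rescaled_pos s e k = (quarter (e ! k) + rescaled_pos s e (Suc k)) / 4"
    using rescaled_pos_Suc[of k e s] assms(1) by simp
  then show ?case
    using step.IH quarter_cases[of "e ! k"] by auto
qed

lemma loc_eq_rescaled_pos:
  assumes "length e = n" "0 < rescaled_pos s e n" "rescaled_pos s e n < 1" "k \<le> n"
  shows "loc s k = rescaled_pos s e k"
  using assms(4)
proof (induction k)
  case 0
  then show ?case by (simp add: rescaled_pos_def edge_start_def)
next
  case (Suc k)
  have "0 < rescaled_pos s e (Suc k)" "rescaled_pos s e (Suc k) < 1"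
    using rescaled_pos_interior[OF assms(1-3) Suc.prems] by auto
  then have "\<lfloor>quarter (e ! k) + rescaled_pos s e (Suc k)\<rfloor> = quarter (e ! k)"
    using quarter_cases[of "e ! k"] by (auto simp: floor_eq_iff)
  moreover have "4 * loc s k = quarter (e ! k) + rescaled_pos s e (Suc k)"
    using Suc rescaled_pos_Suc[of k e s] assms(1) by simp
  ultimately show ?case
    by simp
qed

lemma loc_in_quarter:
  assumes "length e = n" "0 < rescaled_pos s e n" "rescaled_pos s e n < 1" "k < n"
  shows "quarter (e ! k) < 4 * loc s k \<and> 4 * loc s k < quarter (e ! k) + 1"
proof -
  have "4 * loc s k = quarter (e ! k) + rescaled_pos s e (Suc k)"
    using assms loc_eq_rescaled_pos[OF assms(1-3), of k] rescaled_pos_Suc[of k e s] by simp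
  then show ?thesis
    using rescaled_pos_interior[OF assms(1-3), of "Suc k"] assms(4) by simp
qed

lemma letter_eqI:
  assumes "i < 6" "j < 6" "quarter i = quarter j"
    and "quarter i \<in> {1, 2} \<Longrightarrow> upper i \<longleftrightarrow> upper j"
  shows "i = j"
proof -
  have "i \<in> {0, 1, 2, 3, 4, 5}" "j \<in> {0, 1, 2, 3, 4, 5}"
    using assms(1,2) by auto
  then show ?thesis
    using assms(3,4) by (auto simp: quarter_def upper_def)
qed

text \<open>Adjacent edges share endpoints, so only the cylinders over open edges are disjoint;
  the endpoints carry no mass.\<close>

definition open_cyl :: "nat \<Rightarrow> nat list \<Rightarrow> (real \<times> (nat \<Rightarrow> bool)) set" where
  "open_cyl n e = edge_cyl n e {0<..<1}"

lemma open_cyl_inj: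
  assumes "edge_word n e" "edge_word n e'" "x \<in> open_cyl n e" "x \<in> open_cyl n e'"
  shows "e = e'"
proof (rule nth_equalityI)
  obtain s b where x: "x = (s, b)"
    by (cases x)
  have len: "length e = n" "length e' = n" and letters: "set e \<subseteq> {..<6}" "set e' \<subseteq> {..<6}"
    using assms(1,2) by (auto simp: edge_word_def)
  have pos: "0 < rescaled_pos s e n" "rescaled_pos s e n < 1"
      "0 < rescaled_pos s e' n" "rescaled_pos s e' n < 1"
    and bits: "\<And>k. k < n \<Longrightarrow> mid (loc s k) \<Longrightarrow> (b k \<longleftrightarrow> upper (e ! k)) \<and> (b k \<longleftrightarrow> upper (e' ! k))"
    using assms(3,4) len
    by (auto simp: x open_cyl_def edge_cyl_def rescaled_pos_def Let_def)
  show "length e = length e'"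
    using len by simp
  fix k assume "k < length e"
  then have k: "k < n"
    using len by simp
  note q = loc_in_quarter[OF len(1) pos(1,2) k] loc_in_quarter[OF len(2) pos(3,4) k]
  have "quarter (e ! k) = quarter (e' ! k)"
    using q quarter_cases[of "e ! k"] quarter_cases[of "e' ! k"] by auto
  moreover have "upper (e ! k) \<longleftrightarrow> upper (e' ! k)" if "quarter (e ! k) \<in> {1, 2}"
    using bits[OF k] q that by (auto simp: mid_def)
  moreover have "e ! k < 6" "e' ! k < 6"
    using k len letters by (metis lessThan_iff nth_mem subsetD)+
  ultimately show "e ! k = e' ! k"
    by (blast intro: letter_eqI)
qed

definition letter_prob :: "real \<Rightarrow> nat \<Rightarrow> real" where
  "letter_prob w i = wfac w i / 4"

definition upper_count :: "nat list \<Rightarrow> real" where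
  "upper_count e = sum_list (map (\<lambda>i. of_bool (upper i)) e)"

lemma edge_density_div_eq: "edge_density w e / 4 ^ length e = prod_list (map (letter_prob w) e)"
proof (induction e)
  case (Cons i e)
  have "edge_density w (i # e) = wfac w i * edge_density w e"
    unfolding edge_density_def by (simp add: prod.lessThan_Suc_shift del: prod.lessThan_Suc)
  then show ?case
    using Cons by (simp add: letter_prob_def field_simps)
qed (simp add: edge_density_def)

lemma sum_six:
  fixes f :: "nat \<Rightarrow> real"
  shows "(\<Sum>i<6. f i) = f 0 + f 1 + f 2 + f 3 + f 4 + f 5"
  by (simp add: numeral_eq_Suc)

lemma letter_prob_nonneg: "0 \<le> w \<Longrightarrow> w \<le> 1 \<Longrightarrow> 0 \<le> letter_prob w i"
  by (simp add: letter_prob_def wfac_def)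

lemma sum_letter_prob: "(\<Sum>i<6. letter_prob w i) = 1"
  by (simp add: sum_six letter_prob_def wfac_def field_simps)

lemma mean_letter_upper: "(\<Sum>i<6. letter_prob w i * of_bool (upper i)) = w / 2"
  by (simp add: sum_six letter_prob_def wfac_def upper_def)

lemma variance_letter_upper:
  "(\<Sum>i<6. letter_prob w i * (of_bool (upper i) - w / 2)\<^sup>2) = w / 2 * (1 - w / 2)"
  by (simp add: sum_six letter_prob_def wfac_def upper_def power2_eq_square algebra_simps)

lemma variance_upper_count:
  "(\<Sum>e\<in>words n. prod_list (map (letter_prob w) e) * (upper_count e - n * (w / 2))\<^sup>2)
     = n * (w / 2 * (1 - w / 2))"
  using variance_sum_list_words[of "letter_prob w" "\<lambda>i. of_bool (upper i)" n]
  by (simp add: sum_letter_prob mean_letter_upper variance_letter_upper upper_count_def)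

lemma space_diamond_space: "space diamond_space = diamond_X"
  unfolding diamond_space_def by (rule space_measure_of) (auto simp: edge_cyl_def)

lemma edge_cyl_sets: "edge_word n e \<Longrightarrow> B \<in> sets borel \<Longrightarrow> edge_cyl n e B \<in> sets diamond_space"
  unfolding diamond_space_def by (rule in_measure_of) (auto simp: edge_cyl_def)

lemma space_is_mu: "is_mu w \<mu> \<Longrightarrow> space \<mu> = diamond_X"
  unfolding is_mu_def by (metis sets_eq_imp_space_eq space_diamond_space)

lemma open_cyl_sets: "is_mu w \<mu> \<Longrightarrow> e \<in> words n \<Longrightarrow> open_cyl n e \<in> sets \<mu>"
  unfolding is_mu_def open_cyl_def words_def by (simp add: edge_cyl_sets)

lemma is_mu_measure_edge_cyl:
  "is_mu w \<mu> \<Longrightarrow> edge_word n e \<Longrightarrow> B \<in> sets borel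
    \<Longrightarrow> measure \<mu> (edge_cyl n e B) = edge_density w e / 4 ^ n * measure lborel (B \<inter> {0..1})"
  by (simp add: is_mu_def)

lemma measure_open_cyl:
  assumes "is_mu w \<mu>" "e \<in> words n"
  shows "measure \<mu> (open_cyl n e) = prod_list (map (letter_prob w) e)"
proof -
  have "measure \<mu> (open_cyl n e)
      = edge_density w e / 4 ^ n * measure lborel ({0<..<1::real} \<inter> {0..1})"
    unfolding open_cyl_def using assms by (intro is_mu_measure_edge_cyl) (auto simp: words_def)
  also have "measure lborel ({0<..<1::real} \<inter> {0..1}) = 1"
    by (simp add: Int_absorb2 greaterThanLessThan_subseteq_atLeastAtMost_iff)
  finally show ?thesis
    using assms(2) by (simp add: words_def edge_word_def flip: edge_density_div_eq)
qed

definition typical :: "real \<Rightarrow> real \<Rightarrow> nat \<Rightarrow> (real \<times> (nat \<Rightarrow> bool)) set" where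
  "typical w \<epsilon> n = (\<Union>e\<in>{e\<in>words n. \<bar>upper_count e - n * (w / 2)\<bar> \<le> n * \<epsilon>}. open_cyl n e)"

lemma typical_sets: "is_mu w' \<mu> \<Longrightarrow> typical w \<epsilon> n \<in> sets \<mu>"
  unfolding typical_def using finite_words by (intro sets.finite_UN) (auto intro: open_cyl_sets)

lemma typical_disjoint:
  assumes "0 < n" "4 * \<epsilon> < \<bar>w - w'\<bar>"
  shows "typical w \<epsilon> n \<inter> typical w' \<epsilon> n = {}"
proof (rule ccontr)
  assume "typical w \<epsilon> n \<inter> typical w' \<epsilon> n \<noteq> {}"
  then obtain x e e' where e: "e \<in> words n" "\<bar>upper_count e - n * (w / 2)\<bar> \<le> n * \<epsilon>"
      "x \<in> open_cyl n e"
    and e': "e' \<in> words n" "\<bar>upper_count e' - n * (w' / 2)\<bar> \<le> n * \<epsilon>" "x \<in> open_cyl n e'"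
    unfolding typical_def by blast
  then have "e = e'"
    by (auto simp: words_def intro: open_cyl_inj)
  with e(2) e'(2) have "\<bar>n * w - n * w'\<bar> \<le> n * (4 * \<epsilon>)"
    by (simp add: abs_le_iff algebra_simps)
  then have "n * \<bar>w - w'\<bar> \<le> n * (4 * \<epsilon>)"
    by (simp add: abs_mult right_diff_distrib[symmetric])
  with assms show False
    by simp
qed

lemma measure_compl_typical:
  assumes "is_mu w \<mu>" "0 \<le> w" "w \<le> 1" "0 < \<epsilon>" "0 < n"
  shows "measure \<mu> (diamond_X - typical w \<epsilon> n) \<le> w / 2 * (1 - w / 2) / (n * \<epsilon>\<^sup>2)"
proof -
  interpret prob_space \<mu>
    using assms(1) by (simp add: is_mu_def)
  let ?P = "\<lambda>e. prod_list (map (letter_prob w) e)" and ?D = "\<lambda>e. upper_count e - n * (w / 2)"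
  let ?T = "{e\<in>words n. \<bar>?D e\<bar> \<le> n * \<epsilon>}" and ?A = "{e\<in>words n. n * \<epsilon> < \<bar>?D e\<bar>}"
  have "measure \<mu> (typical w \<epsilon> n) = (\<Sum>e\<in>?T. measure \<mu> (open_cyl n e))"
    unfolding typical_def using finite_words
    by (intro finite_measure_finite_Union)
      (auto simp: disjoint_family_on_def words_def intro: open_cyl_sets[OF assms(1)] dest: open_cyl_inj)
  also have "\<dots> = (\<Sum>e\<in>?T. ?P e)"
    by (simp add: measure_open_cyl[OF assms(1)])
  finally have typical: "measure \<mu> (typical w \<epsilon> n) = (\<Sum>e\<in>?T. ?P e)" .
  have "?T \<union> ?A = words n"
    by auto
  then have "1 = (\<Sum>e\<in>?T \<union> ?A. ?P e)"
    by (simp add: sum_prod_list_words sum_letter_prob)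
  also have "\<dots> = (\<Sum>e\<in>?T. ?P e) + (\<Sum>e\<in>?A. ?P e)"
    using finite_words by (intro sum.union_disjoint) auto
  finally have "measure \<mu> (diamond_X - typical w \<epsilon> n) = (\<Sum>e\<in>?A. ?P e)"
    using prob_compl[OF typical_sets[OF assms(1)]] typical space_is_mu[OF assms(1)] by simp
  also have "\<dots> \<le> (\<Sum>e\<in>words n. ?P e * (?D e)\<^sup>2) / (n * \<epsilon>)\<^sup>2"
    using finite_words assms by (intro chebyshev_finite_sum prod_list_nonneg) (auto intro: letter_prob_nonneg)
  also have "\<dots> = w / 2 * (1 - w / 2) / (n * \<epsilon>\<^sup>2)"
    using assms(4,5) unfolding variance_upper_count by (simp add: power2_eq_square)
  finally show ?thesis .
qed

lemma limsup_compl_typical_null: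
  assumes "is_mu w \<mu>" "0 \<le> w" "w \<le> 1" "0 < \<epsilon>"
  shows "limsup (\<lambda>m. diamond_X - typical w \<epsilon> ((Suc m)\<^sup>2)) \<in> null_sets \<mu>"
proof -
  interpret prob_space \<mu>
    using assms(1) by (simp add: is_mu_def)
  let ?c = "w / 2 * (1 - w / 2) / \<epsilon>\<^sup>2"
  have "summable (\<lambda>m. inverse (real m ^ 2))"
    by (rule inverse_power_summable) simp
  then have bound_summable: "summable (\<lambda>m. ?c * inverse (real (Suc m) ^ 2))"
    by (intro summable_mult) (subst summable_Suc_iff)
  have bound: "measure \<mu> (diamond_X - typical w \<epsilon> ((Suc m)\<^sup>2)) \<le> ?c * inverse (real (Suc m) ^ 2)"
    for m
    using measure_compl_typical[OF assms(1-4), of "(Suc m)\<^sup>2"] by (simp add: field_simps)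
  have "summable (\<lambda>m. measure \<mu> (diamond_X - typical w \<epsilon> ((Suc m)\<^sup>2)))"
    using bound by (intro summable_comparison_test'[OF bound_summable]) auto
  moreover have "diamond_X - typical w \<epsilon> n \<in> sets \<mu>" for n
    using typical_sets[OF assms(1)] sets.top[of \<mu>] space_is_mu[OF assms(1)] by auto
  ultimately show ?thesis
    by (intro borel_cantelli_limsup1) (auto simp: less_top[symmetric])
qed

lemma mutually_singularI:
  assumes sets_eq: "sets N = sets M"
    and sets: "\<And>n. A n \<in> sets M" "\<And>n. B n \<in> sets M"
    and null: "limsup A \<in> null_sets M" "limsup B \<in> null_sets N"
    and cover: "\<And>n. space M - A n \<subseteq> B n"
  shows "mutually_singular M N"
  unfolding mutually_singular_def
proof (intro bexI conjI)
  have "space N - limsup A \<subseteq> limsup B"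
  proof
    fix x assume x: "x \<in> space N - limsup A"
    then obtain n0 where "\<forall>n\<ge>n0. x \<notin> A n"
      by (auto simp: limsup_INF_SUP)
    moreover have "space N = space M"
      using sets_eq by (rule sets_eq_imp_space_eq)
    ultimately have "\<forall>n\<ge>n0. x \<in> B n"
      using x cover by blast
    then show "x \<in> limsup B"
      by (auto simp: limsup_INF_SUP intro: le_trans[OF _ max.cobounded1] max.cobounded2)
  qed
  moreover have "space N - limsup A \<in> sets N"
    using sets sets_eq by auto
  ultimately show "emeasure N (space N - limsup A) = 0"
    using null(2) null_sets_subset by blast
  show "limsup A \<in> sets N"
    using sets sets_eq by simp
qed (use null(1) in auto)

theorem lemma2p2:
  fixes w w' :: real and \<mu> \<mu>' :: "(real \<times> (nat \<Rightarrow> bool)) measure"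
  assumes "0 < w" "w < 1" "0 < w'" "w' < 1" "w \<noteq> w'"
    and "is_mu w \<mu>" and "is_mu w' \<mu>'"
  shows "mutually_singular \<mu> \<mu>'"
proof -
  define \<epsilon> where "\<epsilon> = \<bar>w - w'\<bar> / 8"
  have \<epsilon>: "0 < \<epsilon>" "4 * \<epsilon> < \<bar>w - w'\<bar>"
    using assms(5) by (auto simp: \<epsilon>_def)
  have X: "diamond_X \<in> sets \<mu>"
    using sets.top[of \<mu>] space_is_mu[OF assms(6)] by simp
  show ?thesis
  proof (rule mutually_singularI)
    show "sets \<mu>' = sets \<mu>"
      using assms(6,7) by (simp add: is_mu_def)
    show "diamond_X - typical w \<epsilon> ((Suc m)\<^sup>2) \<in> sets \<mu>"
      and "diamond_X - typical w' \<epsilon> ((Suc m)\<^sup>2) \<in> sets \<mu>" for m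
      using X typical_sets[OF assms(6)] by auto
    show "limsup (\<lambda>m. diamond_X - typical w \<epsilon> ((Suc m)\<^sup>2)) \<in> null_sets \<mu>"
      using assms(1,2,6) \<epsilon>(1) by (intro limsup_compl_typical_null) auto
    show "limsup (\<lambda>m. diamond_X - typical w' \<epsilon> ((Suc m)\<^sup>2)) \<in> null_sets \<mu>'"
      using assms(3,4,7) \<epsilon>(1) by (intro limsup_compl_typical_null) auto
    show "space \<mu> - (diamond_X - typical w \<epsilon> ((Suc m)\<^sup>2))
        \<subseteq> diamond_X - typical w' \<epsilon> ((Suc m)\<^sup>2)" for m
      using typical_disjoint[OF _ \<epsilon>(2), of "(Suc m)\<^sup>2"] space_is_mu[OF assms(6)] by auto
  qed
qed

end
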